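(* Let $X$ be a subset of $[0,1]$ with finitely many isolated points. Then $\overline{\dim}_{GB}(X)=\overline{\dim}_B(X)+1$.
   Context: For $\delta>0$ and $F\subset\mathbb{R}^d$, $N_\delta(F)$ is the number of cubes of the standard $\delta$-grid in $\mathbb{R}^d$ that intersect $F$, and $\overline{\dim}_B(F)=\limsup_{\delta\to0}\frac{\log N_\delta(F)}{-\log\delta}$ is the upper box dimension. $C_u(X)$ is the set of uniformly continuous real functions on $X$, $\mathrm{graph}(f)=\{(x,f(x)):x\in X\}$, and the upper graph box dimension is $\overline{\dim}_{GB}(X)=\sup_{f\in C_u(X)}\overline{\dim}_B(\mathrm{graph}(f))$. *)

theory Defs
  imports "HOL-Analysis.Analysis"
begin

text \<open>A grid cube is indexed by an integer vector k (on the coordinate basis) and equals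
  the product over basis vectors b of [k b * delta, (k b + 1) * delta].\<close>
definition grid_count :: "real \<Rightarrow> 'a::euclidean_space set \<Rightarrow> nat" where
  "grid_count \<delta> F = card {k \<in> Basis \<rightarrow>\<^sub>E (UNIV :: int set).
      \<exists>x\<in>F. \<forall>b\<in>Basis. of_int (k b) * \<delta> \<le> x \<bullet> b \<and> x \<bullet> b \<le> (of_int (k b) + 1) * \<delta>}"

definition upper_box_dim :: "'a::euclidean_space set \<Rightarrow> ereal" where
  "upper_box_dim F = Limsup (at_right 0) (\<lambda>\<delta>. ereal (ln (real (grid_count \<delta> F)) / - ln \<delta>))"

definition upper_graph_box_dim :: "real set \<Rightarrow> ereal" where
  "upper_graph_box_dim X =
     (SUP f \<in> {f :: real \<Rightarrow> real. uniformly_continuous_on X f}.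
        upper_box_dim ((\<lambda>x. (x, f x)) ` X))"

end

theory Submission
  imports Defs
begin

text \<open>
  Upper bound: over each of the \<open>N\<^sub>\<delta>(X)\<close> grid intervals meeting \<open>X\<close>, the graph of a bounded
  function meets \<open>O(1/\<delta>)\<close> grid squares, so no graph exceeds \<open>dim\<^sub>B X + 1\<close>.

  Lower bound: fix \<open>a < dim\<^sub>B X\<close> and a scale \<open>\<delta>\<close> with \<open>N\<^sub>\<delta>(X) \<ge> \<delta> powr (-a)\<close>. The finitely
  many isolated points occupy at most two intervals each, so a fixed fraction of the intervals
  contain limit points of \<open>X\<close>;
  keep every third one and pick, near each retained limit point, about \<open>A/\<delta>\<close> points of \<open>X\<close>.
  A continuous bump of height \<open>A\<close> that lifts these points by \<open>0, 3\<delta>, 6\<delta>, \<dots>\<close> forces every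
  function lying within \<open>\<delta>/2\<close> above (continuous base) + (bump) to meet about
  \<open>N\<^sub>\<delta>(X) \<cdot> A/\<delta>\<close> squares. Adding such bumps at rapidly shrinking scales and amplitudes, each
  later bump small enough to stay inside the earlier bands, the partial sums converge uniformly
  to a continuous function whose graph has many squares at infinitely many scales.
\<close>

section \<open>Grid counts on the line and in the plane\<close>

definition grid_cell :: "real \<Rightarrow> int \<Rightarrow> real set" where
  "grid_cell d i = {of_int i * d .. (of_int i + 1) * d}"

definition cells :: "real \<Rightarrow> real set \<Rightarrow> int set" where
  "cells d X = {i. \<exists>x\<in>X. x \<in> grid_cell d i}"

definition boxes :: "real \<Rightarrow> (real \<times> real) set \<Rightarrow> (int \<times> int) set" where
  "boxes d F = {(i, j). \<exists>(x, y)\<in>F. x \<in> grid_cell d i \<and> y \<in> grid_cell d j}"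

lemma grid_count_real: "grid_count d (X :: real set) = card (cells d X)"
proof -
  let ?S = "{k \<in> Basis \<rightarrow>\<^sub>E (UNIV :: int set).
      \<exists>x\<in>X. \<forall>b\<in>Basis. of_int (k b) * d \<le> x \<bullet> b \<and> x \<bullet> b \<le> (of_int (k b) + 1) * d}"
  have inj: "inj_on (\<lambda>k. k 1) ?S"
    by (auto simp: inj_on_def PiE_iff extensional_def Basis_real_def intro!: ext) metis
  have img: "(\<lambda>k. k 1) ` ?S = cells d X"
  proof safe
    fix i assume "i \<in> cells d X"
    then obtain x where "x \<in> X" "x \<in> grid_cell d i"
      by (auto simp: cells_def)
    then show "i \<in> (\<lambda>k. k 1) ` ?S"
      by (intro image_eqI[where x="\<lambda>b. if b = 1 then i else undefined"])
         (auto simp: Basis_real_def PiE_iff extensional_def grid_cell_def)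
  qed (auto simp: Basis_real_def cells_def grid_cell_def)
  show ?thesis
    unfolding grid_count_def using card_image[OF inj] img by simp
qed

lemma grid_count_prod: "grid_count d (F :: (real \<times> real) set) = card (boxes d F)"
proof -
  let ?S = "{k \<in> Basis \<rightarrow>\<^sub>E (UNIV :: int set).
      \<exists>x\<in>F. \<forall>b\<in>Basis. of_int (k b) * d \<le> x \<bullet> b \<and> x \<bullet> b \<le> (of_int (k b) + 1) * d}"
  have B: "(Basis :: (real \<times> real) set) = {(1, 0), (0, 1)}"
    by (auto simp: Basis_prod_def)
  have inj: "inj_on (\<lambda>k. (k (1, 0), k (0, 1))) ?S"
  proof (intro inj_onI ext)
    fix k k' and b :: "real \<times> real"
    assume k: "k \<in> ?S" "k' \<in> ?S" and eq: "(k (1, 0), k (0, 1)) = (k' (1, 0), k' (0, 1))"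
    show "k b = k' b"
    proof (cases "b \<in> Basis")
      case True
      then show ?thesis
        using eq unfolding B by auto
    next
      case False
      then show ?thesis
        using k by (metis (no_types, lifting) PiE_arb mem_Collect_eq)
    qed
  qed
  have img: "(\<lambda>k. (k (1, 0), k (0, 1))) ` ?S = boxes d F"
  proof (intro equalityI subsetI)
    fix ij assume "ij \<in> (\<lambda>k. (k (1, 0), k (0, 1))) ` ?S"
    then obtain k p where "p \<in> F" "\<forall>b\<in>Basis. of_int (k b) * d \<le> p \<bullet> b \<and> p \<bullet> b \<le> (of_int (k b) + 1) * d"
      and ij: "ij = (k (1, 0), k (0, 1))"
      by blast
    moreover obtain x y where "p = (x, y)"
      by fastforce
    ultimately have "fst p \<in> grid_cell d (k (1, 0))" "snd p \<in> grid_cell d (k (0, 1))"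
      by (auto simp: B grid_cell_def inner_Pair)
    then show "ij \<in> boxes d F"
      unfolding ij boxes_def using \<open>p \<in> F\<close> by (auto intro!: bexI[of _ p])
  next
    fix ij assume "ij \<in> boxes d F"
    then obtain i j x y where ij: "ij = (i, j)" and "(x, y) \<in> F" "x \<in> grid_cell d i" "y \<in> grid_cell d j"
      by (auto simp: boxes_def)
    then show "ij \<in> (\<lambda>k. (k (1, 0), k (0, 1))) ` ?S"
      by (intro image_eqI[where x="\<lambda>b. if b = (1, 0) then i else if b = (0, 1) then j else undefined"])
         (auto simp: B PiE_iff extensional_def inner_Pair grid_cell_def intro!: bexI[of _ "(x, y)"])
  qed
  show ?thesis
    unfolding grid_count_def using card_image[OF inj] img by simp
qed

lemma in_grid_cell_iff: "d > 0 \<Longrightarrow> x \<in> grid_cell d i \<longleftrightarrow> of_int i \<le> x / d \<and> x / d \<le> of_int i + 1"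
  by (simp add: grid_cell_def field_simps)

lemma floor_divide_in_grid_cell: "d > 0 \<Longrightarrow> x \<in> grid_cell d \<lfloor>x / d\<rfloor>"
  by (simp add: in_grid_cell_iff)

lemma cells_subset_interval:
  assumes "d > 0" "X \<subseteq> {lo..hi}"
  shows "cells d X \<subseteq> {\<lfloor>lo / d\<rfloor> - 1 .. \<lceil>hi / d\<rceil>}"
proof
  fix i assume "i \<in> cells d X"
  then obtain x where "x \<in> X" "of_int i \<le> x / d" "x / d \<le> of_int i + 1"
    using assms(1) by (auto simp: cells_def in_grid_cell_iff)
  moreover have "lo \<le> x" "x \<le> hi"
    using \<open>x \<in> X\<close> assms(2) by auto
  then have "lo / d \<le> x / d" "x / d \<le> hi / d"
    using assms(1) by (simp_all add: divide_right_mono)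
  ultimately show "i \<in> {\<lfloor>lo / d\<rfloor> - 1 .. \<lceil>hi / d\<rceil>}"
    by simp linarith
qed

lemma finite_cells: "d > 0 \<Longrightarrow> bounded X \<Longrightarrow> finite (cells d X)"
  by (metis bounded_subset_cbox_symmetric cbox_interval cells_subset_interval finite_atLeastAtMost_int
      finite_subset)

lemma card_cells_le:
  assumes "d > 0" "X \<subseteq> {lo..hi}" "lo \<le> hi"
  shows "real (card (cells d X)) \<le> (hi - lo) / d + 4"
proof -
  have "card (cells d X) \<le> nat (\<lceil>hi / d\<rceil> - \<lfloor>lo / d\<rfloor> + 2)"
    using card_mono[OF _ cells_subset_interval[OF assms(1,2)]] by simp
  moreover have "lo / d \<le> hi / d"
    using assms by (simp add: divide_right_mono)
  ultimately show ?thesis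
    by (simp add: diff_divide_distrib) linarith
qed

lemma cells_nonempty: "d > 0 \<Longrightarrow> X \<noteq> {} \<Longrightarrow> cells d X \<noteq> {}"
  by (auto simp: cells_def dest: floor_divide_in_grid_cell)

lemma boxes_subset_cells_Times: "boxes d F \<subseteq> cells d (fst ` F) \<times> cells d (snd ` F)"
  by (force simp: boxes_def cells_def)

lemma finite_boxes: "d > 0 \<Longrightarrow> bounded F \<Longrightarrow> finite (boxes d F)"
  using boxes_subset_cells_Times[of d F] finite_cells[of d "fst ` F"] finite_cells[of d "snd ` F"]
  by (auto intro: finite_subset bounded_linear_image bounded_linear_fst bounded_linear_snd)

lemma card_boxes_graph_le:
  assumes "bounded X" "\<forall>x\<in>X. \<bar>f x\<bar> \<le> B" "0 < d" "d \<le> 1"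
  shows "real (card (boxes d ((\<lambda>x. (x, f x)) ` X))) \<le> real (card (cells d X)) * (6 * max B 1 / d)"
proof -
  let ?G = "(\<lambda>x. (x, f x)) ` X"
  have fX: "f ` X \<subseteq> {- max B 1 .. max B 1}"
    using assms(2) by (force simp: abs_le_iff)
  have "finite (cells d (f ` X))"
    using cells_subset_interval[OF assms(3) fX] finite_subset by blast
  then have "card (boxes d ?G) \<le> card (cells d X \<times> cells d (f ` X))"
    using boxes_subset_cells_Times[of d ?G] finite_cells[OF assms(3,1)]
    by (intro card_mono) (auto simp: image_image)
  then have "real (card (boxes d ?G)) \<le> real (card (cells d X)) * real (card (cells d (f ` X)))"
    by (simp add: card_cartesian_product flip: of_nat_mult)
  moreover have "real (card (cells d (f ` X))) \<le> 6 * max B 1 / d"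
  proof -
    have "real (card (cells d (f ` X))) \<le> 2 * max B 1 / d + 4"
      using card_cells_le[OF assms(3) fX] by simp
    moreover have "4 \<le> 4 * max B 1 / d"
      using assms(3,4) by (simp add: field_simps)
    moreover have "6 * max B 1 / d = 2 * max B 1 / d + 4 * max B 1 / d"
      by (simp add: field_simps)
    ultimately show ?thesis
      by linarith
  qed
  ultimately show ?thesis
    by (meson mult_left_mono of_nat_0_le_iff order_trans)
qed

lemma ln_ratio_le_of_card_le:
  assumes "0 < d" "d < 1" "1 \<le> C" "real M \<le> real N * (C / d)"
  shows "ln (real M) / - ln d \<le> ln (real N) / - ln d + (1 + ln C / - ln d)"
proof (cases "M = 0")
  case True
  have "0 \<le> ln (real N)"
    by (cases "N = 0") auto
  moreover have "0 \<le> ln C" "0 < - ln d"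
    using assms(1-3) by simp_all
  ultimately have "0 \<le> ln (real N) / - ln d" "0 \<le> ln C / - ln d"
    by (simp_all only: divide_nonneg_pos)
  then show ?thesis
    using True by simp
next
  case False
  then have "N > 0"
    using assms(4) by (auto intro: ccontr)
  then have "ln (real M) \<le> ln (real N) + ln C - ln d"
    using False assms by (simp add: ln_mult ln_div flip: ln_le_cancel_iff)
  moreover have "0 < - ln d"
    using assms(1,2) by simp
  ultimately have "ln (real M) / - ln d \<le> (ln (real N) + ln C - ln d) / - ln d"
    by (simp only: divide_right_mono less_imp_le)
  also have "\<dots> = ln (real N) / - ln d + (1 + ln C / - ln d)"
    using \<open>0 < - ln d\<close> by (simp add: field_simps)
  finally show ?thesis .
qed

lemma neg_ln_tendsto_at_right_0: "filterlim (\<lambda>d::real. - ln d) at_top (at_right 0)"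
  using ln_at_0 filterlim_uminus_at_bot by blast

lemma upper_box_dim_graph_le:
  fixes X :: "real set" and f :: "real \<Rightarrow> real"
  assumes "bounded X" "bounded (f ` X)"
  shows "upper_box_dim ((\<lambda>x. (x, f x)) ` X) \<le> upper_box_dim X + 1"
proof (rule ereal_le_epsilon2)
  fix e :: real assume "0 < e"
  obtain B where B: "\<forall>x\<in>X. \<bar>f x\<bar> \<le> B"
    using assms(2) by (auto simp: bounded_iff)
  define C where "C = 6 * max B 1"
  have "((\<lambda>d. ln C / - ln d) \<longlongrightarrow> 0) (at_right 0)"
    by (rule tendsto_divide_0[OF tendsto_const filterlim_at_top_imp_at_infinity[OF neg_ln_tendsto_at_right_0]])
  then have "\<forall>\<^sub>F d in at_right 0. ln C / - ln d < e"
    using \<open>0 < e\<close> order_tendstoD(2) by blast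
  moreover have "\<forall>\<^sub>F d in at_right 0. 0 < d \<and> d < (1::real)"
    by (auto simp: eventually_at_right_field intro!: exI[of _ 1])
  ultimately have "\<forall>\<^sub>F d in at_right 0.
      ereal (ln (real (grid_count d ((\<lambda>x. (x, f x)) ` X))) / - ln d)
        \<le> ereal (ln (real (grid_count d X)) / - ln d) + ereal (1 + e)"
  proof eventually_elim
    case (elim d)
    have "real (card (boxes d ((\<lambda>x. (x, f x)) ` X))) \<le> real (card (cells d X)) * (C / d)"
      using card_boxes_graph_le[OF assms(1) B] elim by (simp add: C_def)
    then have "ln (real (card (boxes d ((\<lambda>x. (x, f x)) ` X)))) / - ln d
        \<le> ln (real (card (cells d X))) / - ln d + (1 + ln C / - ln d)"
      using elim by (intro ln_ratio_le_of_card_le) (auto simp: C_def)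
    then have "ln (real (card (boxes d ((\<lambda>x. (x, f x)) ` X)))) / - ln d
        \<le> ln (real (card (cells d X))) / - ln d + (1 + e)"
      using elim(1) by linarith
    then show ?case
      by (simp add: grid_count_real grid_count_prod)
  qed
  then have "upper_box_dim ((\<lambda>x. (x, f x)) ` X) \<le> upper_box_dim X + ereal (1 + e)"
    unfolding upper_box_dim_def
    by (subst Limsup_add_ereal_right[symmetric]) (auto intro: Limsup_mono)
  then show "upper_box_dim ((\<lambda>x. (x, f x)) ` X) \<le> upper_box_dim X + 1 + ereal e"
    by (metis add.assoc one_ereal_def plus_ereal.simps(1))
qed

section \<open>Bumps at a single scale\<close>

lemma grid_cell_index_cases: "d > 0 \<Longrightarrow> x \<in> grid_cell d i \<Longrightarrow> i = \<lfloor>x / d\<rfloor> - 1 \<or> i = \<lfloor>x / d\<rfloor>"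
  by (simp add: in_grid_cell_iff) linarith

lemma card_cells_finite_le:
  assumes "d > 0" "finite S"
  shows "card (cells d S) \<le> 2 * card S"
proof -
  have "cells d S \<subseteq> (\<Union>x\<in>S. {\<lfloor>x / d\<rfloor> - 1, \<lfloor>x / d\<rfloor>})"
    using grid_cell_index_cases[OF assms(1)] by (fastforce simp: cells_def)
  then have "card (cells d S) \<le> card (\<Union>x\<in>S. {\<lfloor>x / d\<rfloor> - 1, \<lfloor>x / d\<rfloor>})"
    using assms(2) by (intro card_mono) auto
  also have "\<dots> \<le> (\<Sum>x\<in>S. card {\<lfloor>x / d\<rfloor> - 1, \<lfloor>x / d\<rfloor>})"
    using assms(2) by (rule card_UN_le)
  also have "\<dots> \<le> (\<Sum>x\<in>S. 2)"
    by (intro sum_mono) (simp add: card_insert_le_m1)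
  finally show ?thesis
    by simp
qed

lemma exists_3_separated_subset:
  fixes S :: "int set"
  obtains T where "T \<subseteq> S" "\<forall>i\<in>T. \<forall>j\<in>T. i \<noteq> j \<longrightarrow> 3 \<le> \<bar>i - j\<bar>" "card S \<le> 3 * card T"
proof -
  define R where "R r = {i\<in>S. i mod 3 = r}" for r
  have "i mod 3 = 0 \<or> i mod 3 = 1 \<or> i mod 3 = 2" for i :: int
    by presburger
  then have "S = R 0 \<union> R 1 \<union> R 2"
    unfolding R_def by blast
  moreover have "card (R 0 \<union> R 1 \<union> R 2) \<le> card (R 0) + card (R 1) + card (R 2)"
    by (meson add_le_mono card_Un_le le_refl order_trans)
  ultimately have "card S \<le> card (R 0) + card (R 1) + card (R 2)"
    by simp
  then have "card S \<le> 3 * card (R 0) \<or> card S \<le> 3 * card (R 1) \<or> card S \<le> 3 * card (R 2)"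
    by linarith
  then obtain r where "card S \<le> 3 * card (R r)"
    by blast
  moreover have "3 \<le> \<bar>i - j\<bar>" if "i mod 3 = r" "j mod 3 = r" "i \<noteq> j" for i j :: int
    using that by presburger
  ultimately show ?thesis
    using that[of "R r"] by (auto simp: R_def)
qed

lemma separated_limit_cells:
  fixes X :: "real set"
  assumes "bounded X" "finite {x\<in>X. \<not> x islimpt X}" "infinite X" "d > 0"
  obtains G where "G \<subseteq> cells d {x\<in>X. x islimpt X}" "\<forall>i\<in>G. \<forall>j\<in>G. i \<noteq> j \<longrightarrow> 3 \<le> \<bar>i - j\<bar>"
    "card (cells d X) \<le> 3 * (1 + 2 * card {x\<in>X. \<not> x islimpt X}) * card G"
proof -
  let ?L = "{x\<in>X. x islimpt X}" and ?I = "{x\<in>X. \<not> x islimpt X}"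
  obtain G where G: "G \<subseteq> cells d ?L" "\<forall>i\<in>G. \<forall>j\<in>G. i \<noteq> j \<longrightarrow> 3 \<le> \<bar>i - j\<bar>"
    "card (cells d ?L) \<le> 3 * card G"
    using exists_3_separated_subset by blast
  have finL: "finite (cells d ?L)"
    using bounded_subset[OF assms(1), of ?L] by (intro finite_cells[OF assms(4)]) auto
  have "?L \<noteq> {}"
  proof
    assume "?L = {}"
    then have "X \<subseteq> ?I"
      by blast
    then show False
      using assms(2,3) finite_subset by blast
  qed
  then have "cells d ?L \<noteq> {}"
    by (rule cells_nonempty[OF assms(4)])
  then have L1: "1 \<le> card (cells d ?L)"
    using finL by (simp add: Suc_le_eq card_gt_0_iff)
  have "cells d X = cells d ?L \<union> cells d ?I"
    by (auto simp: cells_def)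
  then have "card (cells d X) \<le> card (cells d ?L) + card (cells d ?I)"
    by (simp add: card_Un_le)
  also have "\<dots> \<le> card (cells d ?L) + 2 * card ?I"
    using card_cells_finite_le[OF assms(4,2)] by simp
  also have "\<dots> \<le> card (cells d ?L) + 2 * card ?I * card (cells d ?L)"
    using L1 by simp
  also have "\<dots> = (1 + 2 * card ?I) * card (cells d ?L)"
    by (simp add: algebra_simps)
  also have "\<dots> \<le> (1 + 2 * card ?I) * (3 * card G)"
    using G(3) by (rule mult_le_mono2)
  also have "\<dots> = 3 * (1 + 2 * card ?I) * card G"
    by (simp only: mult_ac)
  finally show ?thesis
    by (rule that[OF G(1,2)])
qed

lemma abs_diff_less_of_floor_divide_eq:
  fixes a b d :: real
  assumes "0 < d" "\<lfloor>a / d\<rfloor> = \<lfloor>b / d\<rfloor>"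
  shows "\<bar>a - b\<bar> < d"
proof -
  have "\<bar>a / d - b / d\<bar> < 1"
    using assms(2) by linarith
  then show ?thesis
    using assms(1) by (simp add: abs_divide flip: diff_divide_distrib)
qed

lemma card_le_card_boxes_of_separated:
  fixes p :: "'i \<Rightarrow> real \<times> real"
  assumes "0 < d" "bounded F" "p ` I \<subseteq> F"
    and sep: "\<And>k k'. k \<in> I \<Longrightarrow> k' \<in> I \<Longrightarrow> k \<noteq> k' \<Longrightarrow>
      d \<le> \<bar>fst (p k) - fst (p k')\<bar> \<or> d \<le> \<bar>snd (p k) - snd (p k')\<bar>"
  shows "card I \<le> card (boxes d F)"
proof -
  define q where "q k = (\<lfloor>fst (p k) / d\<rfloor>, \<lfloor>snd (p k) / d\<rfloor>)" for k
  have "inj_on q I"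
  proof (rule inj_onI, rule ccontr)
    fix k k' assume "k \<in> I" "k' \<in> I" "q k = q k'" "k \<noteq> k'"
    then show False
      using sep abs_diff_less_of_floor_divide_eq[OF assms(1)] by (fastforce simp: q_def)
  qed
  moreover have "q ` I \<subseteq> boxes d F"
    using assms(3) floor_divide_in_grid_cell[OF assms(1)]
    by (fastforce simp: q_def boxes_def)
  ultimately show ?thesis
    using card_inj_on_le finite_boxes[OF assms(1,2)] by blast
qed

lemma grid_cells_apart:
  assumes "0 < d" "x \<in> grid_cell d i" "y \<in> grid_cell d j" "3 \<le> \<bar>i - j\<bar>"
  shows "2 * d \<le> \<bar>x - y\<bar>"
proof -
  have "2 \<le> \<bar>x / d - y / d\<bar>"
    using assms(2-4) by (simp add: in_grid_cell_iff[OF assms(1)]) linarith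
  then show ?thesis
    using assms(1) by (simp add: abs_divide pos_le_divide_eq flip: diff_divide_distrib)
qed

lemma continuous_interpolation_finite:
  fixes p v :: "'i \<Rightarrow> real"
  assumes "finite I" "inj_on p I" "\<And>k. k \<in> I \<Longrightarrow> v k \<in> {a..b}" "a \<le> b"
  obtains \<phi> where "continuous_on UNIV \<phi>" "\<And>x. \<phi> x \<in> {a..b}" "\<And>k. k \<in> I \<Longrightarrow> \<phi> (p k) = v k"
proof -
  obtain \<phi> where \<phi>: "continuous_on UNIV \<phi>" "\<And>x. x \<in> p ` I \<Longrightarrow> \<phi> x = (v \<circ> the_inv_into I p) x"
      "\<And>x. \<phi> x \<in> cbox a b"
  proof (rule Tietze_closed_interval[of "p ` I" "v \<circ> the_inv_into I p" UNIV a b])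
    show "continuous_on (p ` I) (v \<circ> the_inv_into I p)"
      using assms(1) by (simp add: continuous_on_finite)
    show "closedin (top_of_set UNIV) (p ` I)"
      using assms(1) by (simp add: finite_imp_closed)
    show "cbox a b \<noteq> {}"
      using assms(4) by simp
    show "(v \<circ> the_inv_into I p) x \<in> cbox a b" if "x \<in> p ` I" for x
      using that assms(3) by (auto simp: the_inv_into_f_f[OF assms(2)])
  qed blast
  show ?thesis
    using \<phi> by (intro that[of \<phi>]) (auto simp: the_inv_into_f_f[OF assms(2)])
qed

lemma points_near_limit_points:
  fixes X :: "real set" and c :: "'i \<Rightarrow> real" and g :: "real \<Rightarrow> real" and M :: nat
  assumes "\<And>i. i \<in> G \<Longrightarrow> c i islimpt X \<and> isCont g (c i)" "0 < e"
  obtains pt where "\<And>i. i \<in> G \<Longrightarrow> inj_on (pt i) {..<M}"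
    "\<And>i j. i \<in> G \<Longrightarrow> j < M \<Longrightarrow> pt i j \<in> X \<and> \<bar>pt i j - c i\<bar> < e \<and> \<bar>g (pt i j) - g (c i)\<bar> < e"
proof -
  have "\<exists>q. inj_on q {..<M} \<and> (\<forall>j<M. q j \<in> X \<and> \<bar>q j - c i\<bar> < e \<and> \<bar>g (q j) - g (c i)\<bar> < e)"
    if i: "i \<in> G" for i
  proof -
    obtain \<rho> where \<rho>: "0 < \<rho>" "\<And>y. dist y (c i) < \<rho> \<Longrightarrow> dist (g y) (g (c i)) < e"
      using assms(1)[OF i] assms(2) unfolding continuous_at_eps_delta by blast
    have "infinite (X \<inter> ball (c i) (min \<rho> e))"
      using assms(1)[OF i] \<rho>(1) assms(2) unfolding islimpt_eq_infinite_ball by simp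
    then obtain T where T: "finite T" "card T = M" "T \<subseteq> X \<inter> ball (c i) (min \<rho> e)"
      using infinite_arbitrarily_large by blast
    then obtain q where q: "bij_betw q {..<M} T"
      using ex_bij_betw_nat_finite lessThan_atLeast0 by metis
    have "q j \<in> X \<and> dist (q j) (c i) < min \<rho> e" if "j < M" for j
      using q T(3) that by (auto simp: bij_betw_def dist_commute)
    then show ?thesis
      using q \<rho>(2) by (intro exI[of _ q]) (auto simp: bij_betw_def dist_real_def)
  qed
  then obtain pt where "\<And>i. i \<in> G \<Longrightarrow> inj_on (pt i) {..<M} \<and>
      (\<forall>j<M. pt i j \<in> X \<and> \<bar>pt i j - c i\<bar> < e \<and> \<bar>g (pt i j) - g (c i)\<bar> < e)"
    by metis
  then show ?thesis
    using that by blast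
qed

lemma stacked_values_separated:
  fixes j j' :: nat and d g g' y y' :: real
  assumes "0 < d" "j \<noteq> j'" "\<bar>g - g'\<bar> < d / 2"
    "g + 3 * d * j \<le> y" "y \<le> g + 3 * d * j + d / 2" "g' + 3 * d * j' \<le> y'" "y' \<le> g' + 3 * d * j' + d / 2"
  shows "d \<le> \<bar>y - y'\<bar>"
proof -
  have "real j + 1 \<le> real j' \<or> real j' + 1 \<le> real j"
    using assms(2) by linarith
  then have "3 * d * real j + 3 * d \<le> 3 * d * real j' \<or> 3 * d * real j' + 3 * d \<le> 3 * d * real j"
    using assms(1) by (metis distrib_left mult.right_neutral mult_left_mono mult_pos_pos
        zero_less_numeral less_imp_le)
  then show ?thesis
    using assms(3-7) by linarith
qed

lemma bounded_graph: "bounded X \<Longrightarrow> bounded (f ` X) \<Longrightarrow> bounded ((\<lambda>x. (x, f x)) ` X)"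
  by (rule bounded_subset[OF bounded_Times]) auto

lemma bounded_perturbed_graph:
  fixes X :: "real set" and g F :: "real \<Rightarrow> real"
  assumes "bounded X" "continuous_on UNIV g" "\<forall>x\<in>X. g x \<le> F x \<and> F x \<le> g x + c"
  shows "bounded ((\<lambda>x. (x, F x)) ` X)"
proof -
  have "compact (g ` closure X)"
    using assms(1,2) by (intro compact_continuous_image) (auto intro: continuous_on_subset)
  then obtain B where "\<forall>y\<in>g ` closure X. \<bar>y\<bar> \<le> B"
    unfolding bounded_iff by (metis compact_imp_bounded bounded_iff real_norm_def)
  then have "\<forall>x\<in>X. \<bar>g x\<bar> \<le> B"
    using closure_subset by auto
  then have "\<forall>x\<in>X. \<bar>F x\<bar> \<le> B + \<bar>c\<bar>"
    using assms(3) by fastforce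
  then show ?thesis
    using assms(1) by (intro bounded_graph) (auto simp: bounded_iff)
qed

lemma le_two_mult_nat_floor:
  fixes q :: real
  assumes "2 \<le> q"
  shows "q \<le> 2 * real (nat \<lfloor>q\<rfloor>)"
proof -
  have "real (nat \<lfloor>q\<rfloor>) = of_int \<lfloor>q\<rfloor>"
    using assms by simp
  then show ?thesis
    using assms real_of_int_floor_gt_diff_one[of q] by linarith
qed

lemma limit_point_clusters:
  fixes X :: "real set" and g :: "real \<Rightarrow> real" and M :: nat
  assumes X: "bounded X" "finite {x\<in>X. \<not> x islimpt X}" "infinite X"
    and g: "continuous_on UNIV g" and d: "0 < d"
  obtains G :: "int set" and pt :: "int \<Rightarrow> nat \<Rightarrow> real"
  where "finite G" "card (cells d X) \<le> 3 * (1 + 2 * card {x\<in>X. \<not> x islimpt X}) * card G"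
    "\<And>i. i \<in> G \<Longrightarrow> inj_on (pt i) {..<M}"
    "\<And>i j. i \<in> G \<Longrightarrow> j < M \<Longrightarrow> pt i j \<in> X"
    "\<And>i i' j j'. i \<in> G \<Longrightarrow> i' \<in> G \<Longrightarrow> j < M \<Longrightarrow> j' < M \<Longrightarrow> i \<noteq> i' \<Longrightarrow> d \<le> \<bar>pt i j - pt i' j'\<bar>"
    "\<And>i j j'. i \<in> G \<Longrightarrow> j < M \<Longrightarrow> j' < M \<Longrightarrow> \<bar>g (pt i j) - g (pt i j')\<bar> < d / 2"
proof -
  obtain G where G: "G \<subseteq> cells d {x\<in>X. x islimpt X}" "\<forall>i\<in>G. \<forall>j\<in>G. i \<noteq> j \<longrightarrow> 3 \<le> \<bar>i - j\<bar>"
    "card (cells d X) \<le> 3 * (1 + 2 * card {x\<in>X. \<not> x islimpt X}) * card G"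
    by (rule separated_limit_cells[OF X d])
  have "finite (cells d {x\<in>X. x islimpt X})"
    using bounded_subset[OF X(1), of "{x\<in>X. x islimpt X}"] by (intro finite_cells[OF d]) auto
  then have "finite G"
    by (rule finite_subset[OF G(1)])
  have "\<forall>i\<in>G. \<exists>x. x \<in> X \<and> x islimpt X \<and> x \<in> grid_cell d i"
    using G(1) by (auto simp: cells_def)
  then have "\<exists>c. \<forall>i\<in>G. c i \<in> X \<and> c i islimpt X \<and> c i \<in> grid_cell d i"
    by (rule bchoice)
  then obtain c where c: "\<forall>i\<in>G. c i \<in> X \<and> c i islimpt X \<and> c i \<in> grid_cell d i"
    by blast
  have "\<forall>x. isCont g x"
    using g by (simp add: continuous_on_eq_continuous_at)
  then obtain pt where pt_inj: "\<And>i. i \<in> G \<Longrightarrow> inj_on (pt i) {..<M}"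
    and pt: "\<And>i j. i \<in> G \<Longrightarrow> j < M \<Longrightarrow>
      pt i j \<in> X \<and> \<bar>pt i j - c i\<bar> < d / 4 \<and> \<bar>g (pt i j) - g (c i)\<bar> < d / 4"
    using points_near_limit_points[of G c X g "d / 4" M] c d by auto
  show ?thesis
  proof (rule that[OF \<open>finite G\<close> G(3) pt_inj])
    show "pt i j \<in> X" if "i \<in> G" "j < M" for i j
      using pt that by blast
    show "d \<le> \<bar>pt i j - pt i' j'\<bar>" if "i \<in> G" "i' \<in> G" "j < M" "j' < M" "i \<noteq> i'" for i i' j j'
    proof -
      have "2 * d \<le> \<bar>c i - c i'\<bar>"
        using that c G(2) by (intro grid_cells_apart[OF d]) auto
      moreover have "\<bar>pt i j - c i\<bar> < d / 4" "\<bar>pt i' j' - c i'\<bar> < d / 4"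
        using pt that by blast+
      ultimately show ?thesis
        by linarith
    qed
    show "\<bar>g (pt i j) - g (pt i j')\<bar> < d / 2" if "i \<in> G" "j < M" "j' < M" for i j j'
    proof -
      have "\<bar>g (pt i j) - g (c i)\<bar> < d / 4" "\<bar>g (pt i j') - g (c i)\<bar> < d / 4"
        using pt that by blast+
      then show ?thesis
        by linarith
    qed
  qed
qed

text \<open>Points of one cluster sit at heights \<open>3\<delta>\<close> apart; a band of width \<open>\<delta>/2\<close> and an
  oscillation of \<open>g\<close> below \<open>\<delta>/2\<close> cannot bring two of them into the same row of squares.\<close>

lemma card_clusters_le_card_boxes:
  fixes X :: "real set" and g F :: "real \<Rightarrow> real" and pt :: "'i \<Rightarrow> nat \<Rightarrow> real"
  assumes d: "0 < d" and bounded: "bounded ((\<lambda>x. (x, F x)) ` X)"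
    and in_X: "\<And>i j. i \<in> G \<Longrightarrow> j < M \<Longrightarrow> pt i j \<in> X"
    and far: "\<And>i i' j j'. i \<in> G \<Longrightarrow> i' \<in> G \<Longrightarrow> j < M \<Longrightarrow> j' < M \<Longrightarrow> i \<noteq> i' \<Longrightarrow> d \<le> \<bar>pt i j - pt i' j'\<bar>"
    and osc: "\<And>i j j'. i \<in> G \<Longrightarrow> j < M \<Longrightarrow> j' < M \<Longrightarrow> \<bar>g (pt i j) - g (pt i j')\<bar> < d / 2"
    and band: "\<And>i j. i \<in> G \<Longrightarrow> j < M \<Longrightarrow>
      g (pt i j) + 3 * d * j \<le> F (pt i j) \<and> F (pt i j) \<le> g (pt i j) + 3 * d * j + d / 2"
  shows "card (G \<times> {..<M}) \<le> card (boxes d ((\<lambda>x. (x, F x)) ` X))"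
proof (rule card_le_card_boxes_of_separated[OF d bounded, where p = "\<lambda>(i, j). (pt i j, F (pt i j))"])
  show "(\<lambda>(i, j). (pt i j, F (pt i j))) ` (G \<times> {..<M}) \<subseteq> (\<lambda>x. (x, F x)) ` X"
    using in_X by auto
  fix k k' assume k: "k \<in> G \<times> {..<M}" "k' \<in> G \<times> {..<M}" "k \<noteq> k'"
  obtain i j i' j' where ij: "k = (i, j)" "k' = (i', j')"
    by fastforce
  show "d \<le> \<bar>fst ((\<lambda>(i, j). (pt i j, F (pt i j))) k) - fst ((\<lambda>(i, j). (pt i j, F (pt i j))) k')\<bar> \<or>
      d \<le> \<bar>snd ((\<lambda>(i, j). (pt i j, F (pt i j))) k) - snd ((\<lambda>(i, j). (pt i j, F (pt i j))) k')\<bar>"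
  proof (cases "i = i'")
    case True
    then have "i \<in> G" "j < M" "j' < M" "j \<noteq> j'"
      using k by (auto simp: ij)
    then have "d \<le> \<bar>F (pt i j) - F (pt i j')\<bar>"
      using osc[of i j j'] band[of i j] band[of i j']
      by (intro stacked_values_separated[OF d \<open>j \<noteq> j'\<close>, of "g (pt i j)" "g (pt i j')"]) auto
    then show ?thesis
      using True by (simp add: ij)
  next
    case False
    then show ?thesis
      using far k by (simp add: ij)
  qed
qed

lemma graph_perturbation_at_scale:
  fixes X :: "real set" and g :: "real \<Rightarrow> real"
  assumes X: "bounded X" "finite {x\<in>X. \<not> x islimpt X}" "infinite X"
    and g: "continuous_on UNIV g" and d: "0 < d" "6 * d \<le> A"
  obtains \<phi> where "continuous_on UNIV \<phi>" "\<And>x. 0 \<le> \<phi> x \<and> \<phi> x \<le> A"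
    "\<And>F. \<forall>x\<in>X. g x + \<phi> x \<le> F x \<and> F x \<le> g x + \<phi> x + d / 2 \<Longrightarrow>
      real (card (cells d X)) * A
        \<le> 18 * (1 + 2 * real (card {x\<in>X. \<not> x islimpt X})) * d * real (card (boxes d ((\<lambda>x. (x, F x)) ` X)))"
proof -
  let ?K = "1 + 2 * card {x\<in>X. \<not> x islimpt X}"
  define M where "M = nat \<lfloor>A / (3 * d)\<rfloor>"
  obtain G :: "int set" and pt where G: "finite G" "card (cells d X) \<le> 3 * ?K * card G"
    and pt_inj: "\<And>i. i \<in> G \<Longrightarrow> inj_on (pt i) {..<M}"
    and pt: "\<And>i j. i \<in> G \<Longrightarrow> j < M \<Longrightarrow> pt i j \<in> X"
    and far: "\<And>i i' j j'. i \<in> G \<Longrightarrow> i' \<in> G \<Longrightarrow> j < M \<Longrightarrow> j' < M \<Longrightarrow> i \<noteq> i' \<Longrightarrow> d \<le> \<bar>pt i j - pt i' j'\<bar>"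
    and osc: "\<And>i j j'. i \<in> G \<Longrightarrow> j < M \<Longrightarrow> j' < M \<Longrightarrow> \<bar>g (pt i j) - g (pt i j')\<bar> < d / 2"
    by (rule limit_point_clusters[OF X g d(1), where M = M]) blast
  define I where "I = G \<times> {..<M}"
  have "inj_on (\<lambda>(i, j). pt i j) I"
    using far pt_inj d(1) by (fastforce simp: inj_on_def I_def)
  moreover have "(\<lambda>(i, j). 3 * d * real j) k \<in> {0..A}" if "k \<in> I" for k
  proof -
    obtain i j where k: "k = (i, j)" "j < M"
      using \<open>k \<in> I\<close> by (auto simp: I_def)
    then have "real j + 1 \<le> A / (3 * d)"
      by (simp add: M_def) linarith
    then show ?thesis
      using d by (simp add: k field_simps)
  qed
  moreover have "finite I" "0 \<le> A"
    using G(1) d by (simp_all add: I_def)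
  ultimately obtain \<phi> where \<phi>: "continuous_on UNIV \<phi>" "\<And>x. \<phi> x \<in> {0..A}"
    "\<And>k. k \<in> I \<Longrightarrow> \<phi> ((\<lambda>(i, j). pt i j) k) = (\<lambda>(i, j). 3 * d * real j) k"
    using continuous_interpolation_finite[of I "\<lambda>(i, j). pt i j" "\<lambda>(i, j). 3 * d * real j" 0 A]
    by metis
  have "A / (3 * d) \<le> 2 * real M"
    unfolding M_def using d by (intro le_two_mult_nat_floor) (simp add: field_simps)
  then have M: "A \<le> 6 * d * real M"
    using d(1) by (simp add: field_simps)
  show ?thesis
  proof (rule that[OF \<phi>(1)])
    show "0 \<le> \<phi> x \<and> \<phi> x \<le> A" for x
      using \<phi>(2)[of x] by simp
    fix F assume F: "\<forall>x\<in>X. g x + \<phi> x \<le> F x \<and> F x \<le> g x + \<phi> x + d / 2"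
    have "\<forall>x\<in>X. g x \<le> F x \<and> F x \<le> g x + (A + d / 2)"
      using F \<phi>(2) by (smt (verit) atLeastAtMost_iff)
    then have bnd: "bounded ((\<lambda>x. (x, F x)) ` X)"
      by (rule bounded_perturbed_graph[OF X(1) g])
    have band: "g (pt i j) + 3 * d * j \<le> F (pt i j) \<and> F (pt i j) \<le> g (pt i j) + 3 * d * j + d / 2"
      if "i \<in> G" "j < M" for i j
      using F[rule_format, OF pt[OF that]] \<phi>(3)[of "(i, j)"] that by (simp add: I_def)
    have "card I \<le> card (boxes d ((\<lambda>x. (x, F x)) ` X))"
      unfolding I_def by (rule card_clusters_le_card_boxes[where g = g and pt = pt, OF d(1) bnd pt far osc band])
    moreover have "real (card (cells d X)) \<le> real (3 * ?K * card G)"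
      using G(2) by (simp only: of_nat_le_iff)
    ultimately have "real (card (cells d X)) * A \<le> real (3 * ?K * card G) * (6 * d * real M)"
      using M d by (intro mult_mono) simp_all
    also have "\<dots> = 18 * real ?K * d * real (card I)"
      by (simp add: I_def card_cartesian_product)
    also have "\<dots> \<le> 18 * real ?K * d * real (card (boxes d ((\<lambda>x. (x, F x)) ` X)))"
      using \<open>card I \<le> _\<close> d by (intro mult_left_mono) simp_all
    finally show "real (card (cells d X)) * A
        \<le> 18 * (1 + 2 * real (card {x\<in>X. \<not> x islimpt X})) * d * real (card (boxes d ((\<lambda>x. (x, F x)) ` X)))"
      by simp
  qed
qed

section \<open>Iterated perturbations\<close>

lemma telescoping_bounds:
  fixes a e :: "nat \<Rightarrow> real"
  assumes "\<And>n. a n \<le> a (Suc n)" "\<And>n. a (Suc n) - a n \<le> e n - e (Suc n)" "k \<le> n"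
  shows "a k \<le> a n \<and> a n \<le> a k + e k - e n"
  using assms(3)
proof (induction n rule: dec_induct)
  case (step n)
  then show ?case
    using assms(1,2)[of n] by linarith
qed simp

lemma uniform_limit_of_telescoping_increments:
  fixes h :: "nat \<Rightarrow> 'a \<Rightarrow> real" and e :: "nat \<Rightarrow> real"
  assumes incr: "\<And>n x. h n x \<le> h (Suc n) x"
    and incr_le: "\<And>n x. h (Suc n) x - h n x \<le> e n - e (Suc n)"
    and e: "e \<longlonglongrightarrow> 0"
  obtains f where "\<And>n x. h n x \<le> f x \<and> f x \<le> h n x + e n" "uniform_limit UNIV h f sequentially"
proof -
  have tail: "h k x \<le> h n x \<and> h n x \<le> h k x + e k - e n" if "k \<le> n" for k n x
    using incr incr_le that by (rule telescoping_bounds)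
  have e_nonneg: "0 \<le> e n" for n
  proof (rule LIMSEQ_le_const2[OF e], intro exI allI impI)
    fix m assume "n \<le> m"
    then have "h n undefined \<le> h m undefined \<and> h m undefined \<le> h n undefined + e n - e m"
      by (rule tail)
    then show "e m \<le> e n"
      by linarith
  qed
  define f where "f x = lim (\<lambda>n. h n x)" for x
  have lim: "(\<lambda>n. h n x) \<longlonglongrightarrow> f x" for x
  proof -
    have "incseq (\<lambda>n. h n x)"
      using incr by (rule incseq_SucI)
    moreover have "\<forall>n. h n x \<le> h 0 x + e 0"
    proof
      fix n
      show "h n x \<le> h 0 x + e 0"
        using tail[of 0 n x] e_nonneg[of n] by linarith
    qed
    ultimately show ?thesis
      unfolding f_def by (metis incseq_convergent limI)
  qed
  have bounds: "h n x \<le> f x \<and> f x \<le> h n x + e n" for n x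
  proof
    show "h n x \<le> f x"
      using tail by (intro LIMSEQ_le_const[OF lim]) blast
    show "f x \<le> h n x + e n"
      using tail e_nonneg by (intro LIMSEQ_le_const2[OF lim]) (smt (verit))
  qed
  have "uniform_limit UNIV h f sequentially"
    unfolding uniform_limit_iff
  proof (intro allI impI)
    fix \<epsilon> :: real assume "0 < \<epsilon>"
    then have "\<forall>\<^sub>F n in sequentially. e n < \<epsilon>"
      using order_tendstoD(2)[OF e] by blast
    then show "\<forall>\<^sub>F n in sequentially. \<forall>x\<in>UNIV. dist (h n x) (f x) < \<epsilon>"
    proof eventually_elim
      case (elim n)
      show ?case
      proof
        fix x
        show "dist (h n x) (f x) < \<epsilon>"
          using bounds[of n x] elim by (simp add: dist_real_def)
      qed
    qed
  qed
  then show ?thesis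
    using that bounds by blast
qed

lemma frequently_at_right_of_seq:
  fixes s :: "nat \<Rightarrow> real"
  assumes "\<And>n. 0 < s n" "s \<longlonglongrightarrow> 0" "\<And>n. P (s n)"
  shows "\<exists>\<^sub>F d in at_right 0. P d"
  unfolding frequently_def
proof
  assume "\<forall>\<^sub>F d in at_right 0. \<not> P d"
  moreover have "filterlim s (at_right 0) sequentially"
    using assms(1,2) by (intro tendsto_imp_filterlim_at_right) auto
  ultimately have "\<forall>\<^sub>F n in sequentially. \<not> P (s n)"
    by (rule eventually_compose_filterlim)
  then show False
    using assms(3) by (simp add: eventually_sequentially)
qed

lemma perturbation_sequence:
  fixes P :: "real \<Rightarrow> (real \<Rightarrow> real) \<Rightarrow> bool"
  assumes step: "\<And>g \<eta>. continuous_on UNIV g \<Longrightarrow> 0 < \<eta> \<Longrightarrow>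
    \<exists>d h. 0 < d \<and> d < \<eta> \<and> continuous_on UNIV h \<and> (\<forall>x. g x \<le> h x \<and> h x \<le> g x + \<eta>) \<and>
      (\<forall>F. (\<forall>x. h x \<le> F x \<and> F x \<le> h x + d / 2) \<longrightarrow> P d F)"
  obtains d :: "nat \<Rightarrow> real" and h :: "nat \<Rightarrow> real \<Rightarrow> real"
  where "\<And>n. 0 < d n" "\<And>n. d (Suc n) < d n / 4" "\<And>n. continuous_on UNIV (h n)"
    "\<And>n x. h n x \<le> h (Suc n) x" "\<And>n x. h (Suc n) x \<le> h n x + d n / 4"
    "\<And>n F. \<forall>x. h (Suc n) x \<le> F x \<and> F x \<le> h (Suc n) x + d (Suc n) / 2 \<Longrightarrow> P (d (Suc n)) F"
proof -
  define good where "good s \<longleftrightarrow> 0 < fst s \<and> continuous_on UNIV (snd s)"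
    for s :: "real \<times> (real \<Rightarrow> real)"
  define succ where "succ s s' \<longleftrightarrow> fst s' < fst s / 4 \<and>
      (\<forall>x. snd s x \<le> snd s' x \<and> snd s' x \<le> snd s x + fst s / 4) \<and>
      (\<forall>F. (\<forall>x. snd s' x \<le> F x \<and> F x \<le> snd s' x + fst s' / 2) \<longrightarrow> P (fst s') F)"
    for s s' :: "real \<times> (real \<Rightarrow> real)"
  have "\<exists>\<sigma>. \<forall>n. good (\<sigma> n) \<and> succ (\<sigma> n) (\<sigma> (Suc n))"
  proof (rule dependent_nat_choice)
    have "good (1, \<lambda>_. 0)"
      by (simp add: good_def)
    then show "\<exists>s. good s"
      by blast
    fix s :: "real \<times> (real \<Rightarrow> real)" and n :: nat
    assume "good s"
    then obtain d h where "0 < d" "d < fst s / 4" "continuous_on UNIV h"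
        "\<forall>x. snd s x \<le> h x \<and> h x \<le> snd s x + fst s / 4"
        "\<forall>F. (\<forall>x. h x \<le> F x \<and> F x \<le> h x + d / 2) \<longrightarrow> P d F"
      using step[of "snd s" "fst s / 4"] by (auto simp: good_def)
    then show "\<exists>s'. good s' \<and> succ s s'"
      by (intro exI[of _ "(d, h)"]) (simp add: good_def succ_def)
  qed
  then obtain \<sigma> where "\<And>n. good (\<sigma> n) \<and> succ (\<sigma> n) (\<sigma> (Suc n))"
    by blast
  then show ?thesis
    by (intro that[of "\<lambda>n. fst (\<sigma> n)" "\<lambda>n. snd (\<sigma> n)"]) (auto simp: good_def succ_def)
qed

text \<open>The increments after step \<open>n\<close> sum to less than \<open>d n / 2\<close>, so the limit stays in every
  band guaranteed along the way.\<close>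

lemma frequently_of_perturbations:
  fixes P :: "real \<Rightarrow> (real \<Rightarrow> real) \<Rightarrow> bool"
  assumes step: "\<And>g \<eta>. continuous_on UNIV g \<Longrightarrow> 0 < \<eta> \<Longrightarrow>
    \<exists>d h. 0 < d \<and> d < \<eta> \<and> continuous_on UNIV h \<and> (\<forall>x. g x \<le> h x \<and> h x \<le> g x + \<eta>) \<and>
      (\<forall>F. (\<forall>x. h x \<le> F x \<and> F x \<le> h x + d / 2) \<longrightarrow> P d F)"
  obtains f where "continuous_on UNIV f" "\<exists>\<^sub>F d in at_right 0. P d f"
proof -
  obtain d :: "nat \<Rightarrow> real" and h :: "nat \<Rightarrow> real \<Rightarrow> real"
    where d_pos: "\<And>n. 0 < d n" and d_Suc: "\<And>n. d (Suc n) < d n / 4"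
      and h_cont: "\<And>n. continuous_on UNIV (h n)"
      and h_Suc: "\<And>n x. h n x \<le> h (Suc n) x" "\<And>n x. h (Suc n) x \<le> h n x + d n / 4"
      and P_Suc: "\<And>n F. \<forall>x. h (Suc n) x \<le> F x \<and> F x \<le> h (Suc n) x + d (Suc n) / 2 \<Longrightarrow> P (d (Suc n)) F"
    by (rule perturbation_sequence[OF step]) auto
  have d_le: "d n \<le> d 0 * (1 / 4) ^ n" for n
  proof (induction n)
    case (Suc n)
    then show ?case
      using d_Suc[of n] by simp
  qed simp
  have "d \<longlonglongrightarrow> 0"
  proof (rule tendsto_sandwich[of "\<lambda>_. 0" _ _ "\<lambda>n. d 0 * (1 / 4) ^ n"])
    show "\<forall>\<^sub>F n in sequentially. 0 \<le> d n"
      using d_pos by (simp add: less_imp_le)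
    show "\<forall>\<^sub>F n in sequentially. d n \<le> d 0 * (1 / 4) ^ n"
      using d_le by simp
    show "(\<lambda>n. d 0 * (1 / 4) ^ n) \<longlonglongrightarrow> 0"
      by (intro tendsto_mult_right_zero LIMSEQ_realpow_zero) simp_all
  qed simp
  then have "(\<lambda>n. d n / 2) \<longlonglongrightarrow> 0"
    by (simp add: tendsto_divide_zero)
  moreover have "h (Suc n) x - h n x \<le> d n / 2 - d (Suc n) / 2" for n x
    using h_Suc(2)[of n x] d_Suc[of n] d_pos[of n] by linarith
  ultimately obtain f where f: "\<And>n x. h n x \<le> f x \<and> f x \<le> h n x + d n / 2"
    "uniform_limit UNIV h f sequentially"
    using uniform_limit_of_telescoping_increments[of h "\<lambda>n. d n / 2"] h_Suc(1) by blast
  have "continuous_on UNIV f"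
    using h_cont by (intro uniform_limit_theorem[OF _ f(2)]) simp_all
  moreover have "\<exists>\<^sub>F d in at_right 0. P d f"
    using d_pos f(1) \<open>d \<longlonglongrightarrow> 0\<close>
    by (intro frequently_at_right_of_seq[of "\<lambda>n. d (Suc n)"] P_Suc LIMSEQ_Suc) auto
  ultimately show ?thesis
    using that by blast
qed

lemma Limsup_ge_of_frequently:
  fixes h :: "'a \<Rightarrow> 'b :: complete_linorder"
  assumes "\<exists>\<^sub>F x in F. c \<le> h x"
  shows "c \<le> Limsup F h"
proof (rule ccontr)
  assume "\<not> c \<le> Limsup F h"
  then have "\<forall>\<^sub>F x in F. h x < c"
    by (intro Limsup_lessD) simp
  then show False
    using assms by (simp add: frequently_def not_le)
qed

lemma frequently_card_cells_ge:
  fixes X :: "real set"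
  assumes "bounded X" "X \<noteq> {}" "ereal a < upper_box_dim X"
  shows "\<exists>\<^sub>F d in at_right 0. d powr (- a) \<le> real (card (cells d X))"
proof (rule ccontr)
  assume "\<not> ?thesis"
  then have "\<forall>\<^sub>F d in at_right 0. real (card (cells d X)) < d powr (- a)"
    by (simp add: not_frequently not_le)
  moreover have "\<forall>\<^sub>F d in at_right 0. 0 < d \<and> d < (1::real)"
    by (auto simp: eventually_at_right_field intro!: exI[of _ 1])
  ultimately have "\<forall>\<^sub>F d in at_right 0. ereal (ln (real (grid_count d X)) / - ln d) \<le> ereal a"
  proof eventually_elim
    case (elim d)
    have "cells d X \<noteq> {}" "finite (cells d X)"
      using elim cells_nonempty finite_cells assms(1,2) by auto
    then have "1 \<le> real (card (cells d X))"
      by (simp add: Suc_le_eq card_gt_0_iff)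
    then have "ln (real (card (cells d X))) < ln (d powr (- a))"
      using elim by (subst ln_less_cancel_iff) auto
    also have "\<dots> = a * (- ln d)"
      using elim by (simp add: ln_powr)
    finally have "ln (real (card (cells d X))) < a * (- ln d)" .
    moreover have "0 < - ln d"
      using elim by simp
    ultimately have "ln (real (card (cells d X))) / - ln d < a"
      by (simp only: pos_divide_less_eq)
    then show ?case
      by (simp add: grid_count_real)
  qed
  then have "upper_box_dim X \<le> ereal a"
    unfolding upper_box_dim_def by (rule Limsup_bounded)
  then show False
    using assms(3) by simp
qed

lemma le_ln_ratio_of_powr_le:
  assumes "0 < d" "d < 1" "d powr (- b) \<le> real N"
  shows "b \<le> ln (real N) / - ln d"
proof -
  have "b * (- ln d) = ln (d powr (- b))"
    using assms(1) by (simp add: ln_powr)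
  also have "\<dots> \<le> ln (real N)"
  proof -
    have "0 < d powr (- b)"
      using assms(1) by simp
    moreover have "0 < real N"
      using calculation assms(3) by linarith
    ultimately show ?thesis
      using assms(3) by (subst ln_le_cancel_iff) (auto simp del: ln_powr)
  qed
  finally have "b * (- ln d) \<le> ln (real N)" .
  moreover have "0 < - ln d"
    using assms(1,2) by simp
  ultimately show ?thesis
    by (simp only: pos_le_divide_eq)
qed

lemma powr_le_of_count_bounds:
  fixes d K N B \<epsilon> \<eta> :: real
  assumes "0 < d" "0 < K" "d powr (- a) \<le> N" "d powr \<epsilon> * K \<le> \<eta>" "N * \<eta> \<le> K * d * B"
  shows "d powr (- (a + 1 - \<epsilon>)) \<le> B"
proof -
  have "- (a + 1 - \<epsilon>) = - a + \<epsilon> - 1"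
    by simp
  then have "d powr (- (a + 1 - \<epsilon>)) = d powr (- a) * d powr \<epsilon> / d"
    using assms(1) by (simp only: powr_diff powr_add powr_one_gt_zero_iff less_imp_le powr_one)
  also have "\<dots> \<le> N * (\<eta> / K) / d"
    using assms(1-4) by (intro divide_right_mono mult_mono) (simp_all add: pos_le_divide_eq order.trans[OF powr_ge_zero])
  also have "\<dots> \<le> B"
    using assms(1,2,5) by (simp add: field_simps)
  finally show ?thesis .
qed

lemma graph_perturbation_step:
  fixes X :: "real set" and g :: "real \<Rightarrow> real"
  assumes X: "bounded X" "finite {x\<in>X. \<not> x islimpt X}" "infinite X"
    and a: "ereal a < upper_box_dim X" and \<epsilon>: "0 < \<epsilon>" and g: "continuous_on UNIV g" and \<eta>: "0 < \<eta>"
  shows "\<exists>d h. 0 < d \<and> d < \<eta> \<and> continuous_on UNIV h \<and> (\<forall>x. g x \<le> h x \<and> h x \<le> g x + \<eta>) \<and>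
    (\<forall>F. (\<forall>x. h x \<le> F x \<and> F x \<le> h x + d / 2) \<longrightarrow>
      d powr (- (a + 1 - \<epsilon>)) \<le> real (card (boxes d ((\<lambda>x. (x, F x)) ` X))))"
proof -
  define K where "K = 18 * (1 + 2 * real (card {x\<in>X. \<not> x islimpt X}))"
  have K: "0 < K"
    by (simp add: K_def)
  \<comment> \<open>below \<open>(\<eta> / K) powr (1 / \<epsilon>)\<close>, the constant \<open>K\<close> lost in the count is absorbed by \<open>d powr \<epsilon>\<close>\<close>
  define r where "r = min (\<eta> / 6) ((\<eta> / K) powr (1 / \<epsilon>))"
  have "0 < r"
    using \<eta> K by (simp add: r_def)
  then have "\<forall>\<^sub>F d in at_right 0. 0 < d \<and> d < r"
    by (auto simp: eventually_at_right_field intro!: exI[of _ r])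
  with frequently_card_cells_ge[OF X(1) _ a] X(3)
  have "\<exists>\<^sub>F d in at_right 0. (0 < d \<and> d < r) \<and> d powr (- a) \<le> real (card (cells d X))"
    by (intro frequently_eventually_conj) auto
  then obtain d where d: "0 < d" "d < r" "d powr (- a) \<le> real (card (cells d X))"
    by (auto dest: frequently_ex)
  have "d powr \<epsilon> < ((\<eta> / K) powr (1 / \<epsilon>)) powr \<epsilon>"
    using d \<epsilon> by (intro powr_less_mono2) (simp_all add: r_def)
  then have d\<epsilon>: "d powr \<epsilon> * K \<le> \<eta>"
    using \<epsilon> \<eta> K by (simp add: powr_powr pos_less_divide_eq less_imp_le)
  have "6 * d \<le> \<eta>"
    using d(2) by (simp add: r_def)
  then obtain \<phi> where \<phi>: "continuous_on UNIV \<phi>" "\<And>x. 0 \<le> \<phi> x \<and> \<phi> x \<le> \<eta>"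
    "\<And>F. \<forall>x\<in>X. g x + \<phi> x \<le> F x \<and> F x \<le> g x + \<phi> x + d / 2 \<Longrightarrow>
      real (card (cells d X)) * \<eta>
        \<le> 18 * (1 + 2 * real (card {x\<in>X. \<not> x islimpt X})) * d * real (card (boxes d ((\<lambda>x. (x, F x)) ` X)))"
    by (rule graph_perturbation_at_scale[OF X g d(1)]) auto
  show ?thesis
  proof (intro exI conjI allI impI)
    show "0 < d" "d < \<eta>"
      using d \<open>6 * d \<le> \<eta>\<close> by simp_all
    show "continuous_on UNIV (\<lambda>x. g x + \<phi> x)"
      using g \<phi>(1) by (intro continuous_intros)
    show "g x \<le> g x + \<phi> x" "g x + \<phi> x \<le> g x + \<eta>" for x
      using \<phi>(2)[of x] by simp_all
    fix F assume "\<forall>x. g x + \<phi> x \<le> F x \<and> F x \<le> g x + \<phi> x + d / 2"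
    then have "real (card (cells d X)) * \<eta> \<le> K * d * real (card (boxes d ((\<lambda>x. (x, F x)) ` X)))"
      using \<phi>(3)[of F] by (simp add: K_def)
    then show "d powr (- (a + 1 - \<epsilon>)) \<le> real (card (boxes d ((\<lambda>x. (x, F x)) ` X)))"
      by (rule powr_le_of_count_bounds[OF d(1) K d(3) d\<epsilon>])
  qed
qed

lemma exists_graph_upper_box_dim_ge:
  fixes X :: "real set"
  assumes "bounded X" "finite {x\<in>X. \<not> x islimpt X}" "infinite X" "ereal a < upper_box_dim X" "0 < \<epsilon>"
  obtains f :: "real \<Rightarrow> real"
  where "continuous_on UNIV f" "ereal (a + 1 - \<epsilon>) \<le> upper_box_dim ((\<lambda>x. (x, f x)) ` X)"
proof -
  have step: "\<And>g \<eta>. continuous_on UNIV g \<Longrightarrow> 0 < \<eta> \<Longrightarrow>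
    \<exists>d h. 0 < d \<and> d < \<eta> \<and> continuous_on UNIV h \<and> (\<forall>x. g x \<le> h x \<and> h x \<le> g x + \<eta>) \<and>
      (\<forall>F. (\<forall>x. h x \<le> F x \<and> F x \<le> h x + d / 2) \<longrightarrow>
        d powr (- (a + 1 - \<epsilon>)) \<le> real (card (boxes d ((\<lambda>x. (x, F x)) ` X))))"
    by (rule graph_perturbation_step[OF assms])
  obtain f where f: "continuous_on UNIV f"
    "\<exists>\<^sub>F d in at_right 0. d powr (- (a + 1 - \<epsilon>)) \<le> real (card (boxes d ((\<lambda>x. (x, f x)) ` X)))"
    by (rule frequently_of_perturbations[OF step]) auto
  have "\<forall>\<^sub>F d in at_right 0. 0 < d \<and> d < (1::real)"
    by (auto simp: eventually_at_right_field intro!: exI[of _ 1])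
  with f(2) have "\<exists>\<^sub>F d in at_right 0. ereal (a + 1 - \<epsilon>)
      \<le> ereal (ln (real (grid_count d ((\<lambda>x. (x, f x)) ` X))) / - ln d)"
  proof (rule frequently_eventually_conj[THEN frequently_elim1])
    fix d :: real
    assume "(0 < d \<and> d < 1) \<and> d powr (- (a + 1 - \<epsilon>)) \<le> real (card (boxes d ((\<lambda>x. (x, f x)) ` X)))"
    then have "a + 1 - \<epsilon> \<le> ln (real (card (boxes d ((\<lambda>x. (x, f x)) ` X)))) / - ln d"
      by (intro le_ln_ratio_of_powr_le) auto
    then show "ereal (a + 1 - \<epsilon>) \<le> ereal (ln (real (grid_count d ((\<lambda>x. (x, f x)) ` X))) / - ln d)"
      by (simp add: grid_count_prod)
  qed
  then have "ereal (a + 1 - \<epsilon>) \<le> upper_box_dim ((\<lambda>x. (x, f x)) ` X)"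
    unfolding upper_box_dim_def by (rule Limsup_ge_of_frequently)
  with f(1) show ?thesis
    by (rule that)
qed

lemma uniformly_continuous_on_subset:
  fixes f :: "'a::metric_space \<Rightarrow> 'b::metric_space"
  shows "uniformly_continuous_on S f \<Longrightarrow> T \<subseteq> S \<Longrightarrow> uniformly_continuous_on T f"
  unfolding uniformly_continuous_on_def by (meson subsetD)

lemma upper_graph_box_dim_le:
  assumes "bounded X"
  shows "upper_graph_box_dim X \<le> upper_box_dim X + 1"
  unfolding upper_graph_box_dim_def
proof (rule SUP_least)
  fix f :: "real \<Rightarrow> real" assume "f \<in> {f. uniformly_continuous_on X f}"
  then have "bounded (f ` X)"
    using bounded_uniformly_continuous_image assms by blast
  then show "upper_box_dim ((\<lambda>x. (x, f x)) ` X) \<le> upper_box_dim X + 1"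
    by (rule upper_box_dim_graph_le[OF assms])
qed

lemma upper_graph_box_dim_ge:
  assumes "bounded X" "finite {x\<in>X. \<not> x islimpt X}" "infinite X"
  shows "upper_box_dim X + 1 \<le> upper_graph_box_dim X"
proof (rule dense_le)
  fix t assume t: "t < upper_box_dim X + 1"
  show "t \<le> upper_graph_box_dim X"
  proof (cases t)
    case (real r)
    then have "ereal (r - 1) < upper_box_dim X"
      using t by (cases "upper_box_dim X") auto
    then obtain a where a: "r - 1 < a" "ereal a < upper_box_dim X"
      using ereal_dense2 by force
    then obtain f :: "real \<Rightarrow> real" where f: "continuous_on UNIV f"
        "ereal (a + 1 - (a + 1 - r)) \<le> upper_box_dim ((\<lambda>x. (x, f x)) ` X)"
      using exists_graph_upper_box_dim_ge[OF assms a(2), of "a + 1 - r"] by auto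
    have "uniformly_continuous_on (closure X) f"
      using assms(1) f(1) by (intro compact_uniformly_continuous) (auto intro: continuous_on_subset)
    then have "uniformly_continuous_on X f"
      using closure_subset by (rule uniformly_continuous_on_subset)
    then have "upper_box_dim ((\<lambda>x. (x, f x)) ` X) \<le> upper_graph_box_dim X"
      unfolding upper_graph_box_dim_def by (intro SUP_upper) simp
    then show ?thesis
      using f(2) real by simp
  qed (use t in auto)
qed

theorem corollary1:
  fixes X :: "real set"
  assumes "X \<subseteq> {0..1}"
    and "finite {x \<in> X. \<not> x islimpt X}"
    and "infinite X"
  shows "upper_graph_box_dim X = upper_box_dim X + 1"
proof -
  have "bounded X"
    using assms(1) by (rule bounded_subset[OF bounded_closed_interval])
  then show ?thesis
    using assms(2,3) by (intro antisym upper_graph_box_dim_le upper_graph_box_dim_ge)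
qed

end
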